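(* Assume the setting described in the context, and fix $x=(x_R,x_T)\in\mathbb{R}\times\mathbb{R}^2$ and an index $i$. Let $j=\pi(x,i)$, and suppose $a_i$ and $a_j$ lie on the same curve $\gamma$ of the environment, with arc-length abscissae $s_i,s_j$. Define the approximation error $$\psi_i:=(a_{\pi(0,i)}-a_{\pi(x,i)})\cdot n_i=(a_i-a_j)\cdot n_i .$$ Then $$(a_i+d_i(x)-a_{\pi(x,i)})\cdot n_i=(a_i+d_i(x)-a_{\pi(0,i)})\cdot n_i+\psi_i .$$ Hence the true ICP cost $\sum_i[(a_i+d_i(x)-a_{\pi(x,i)})\cdot n_i]^2$ equals $\sum_i[(a_i+d_i(x)-a_{\pi(0,i)})\cdot n_i+\psi_i]^2$. Moreover, if $\kappa\,|s_i-s_j|\le 1$, then $$|\psi_i|\le 8\,\kappa\,\|x_R\times a_i+x_T\|^2 .$$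
   Context: 2D setting. The environment is a finite union of pairwise disjoint $C^2$ curves in $\mathbb{R}^2$. Each curve $\gamma$ is parametrized by arc length $s$, so $\|\gamma'(s)\|=1$, and has curvature bounded by $\kappa\ge 0$, i.e. $\|\gamma''(s)\|\le\kappa$ for all $s$. A point cloud $a_1,\dots,a_N\in\mathbb{R}^2$ consists of distinct points on these curves. Write $a_k=\gamma(s_k)$, where $s_k$ is the arc-length abscissa of $a_k$ on the curve containing it. For each $i$, $n_i$ is a unit normal vector to that curve at $a_i$, so $n_i\cdot\gamma'(s_i)=0$. For a motion parameter $x=(x_R,x_T)\in\mathbb{R}\times\mathbb{R}^2$, the linearized displacement of $a_i$ is $d_i(x):=x_R\times a_i+x_T$. Here, for a scalar $x_R$ and $a=(a^1,a^2)$, $x_R\times a:=x_R(-a^2,a^1)$. $\pi(x,i)$ denotes an index $j\in\{1,\dots,N\}$ minimizing $\|a_i+d_i(x)-a_j\|$, i.e. closest-point matching of the displaced point to the original cloud. Note $\pi(0,i)=i$. *)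

theory Defs
  imports "HOL-Analysis.Analysis"
begin

type_synonym pt = "real \<times> real"

text \<open>Scalar-times-point cross product: x_R \<times> (a1,a2) = x_R (-a2, a1).\<close>
definition rot :: "real \<Rightarrow> pt \<Rightarrow> pt" where
  "rot r p = (- r * snd p, r * fst p)"

definition disp :: "real \<times> pt \<Rightarrow> pt \<Rightarrow> pt" where
  "disp x p = rot (fst x) p + snd x"

definition arc_curve :: "real \<Rightarrow> real set \<Rightarrow> (real \<Rightarrow> pt) \<Rightarrow> (real \<Rightarrow> pt) \<Rightarrow> (real \<Rightarrow> pt) \<Rightarrow> bool" where
  "arc_curve kappa I g g1 g2 \<longleftrightarrow>
     is_interval I \<and>
     (\<forall>t\<in>I. (g has_vector_derivative g1 t) (at t within I)) \<and>
     (\<forall>t\<in>I. (g1 has_vector_derivative g2 t) (at t within I)) \<and>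
     continuous_on I g2 \<and>
     (\<forall>t\<in>I. norm (g1 t) = 1) \<and>
     (\<forall>t\<in>I. norm (g2 t) \<le> kappa)"

definition closest_matching :: "nat \<Rightarrow> (nat \<Rightarrow> pt) \<Rightarrow> (real \<times> pt \<Rightarrow> nat \<Rightarrow> nat) \<Rightarrow> bool" where
  "closest_matching N a p \<longleftrightarrow>
     (\<forall>x. \<forall>i<N. p x i < N \<and>
        (\<forall>j<N. norm (a i + disp x (a i) - a (p x i)) \<le> norm (a i + disp x (a i) - a j)))"

end

theory Submission
  imports Defs
begin

(*
  The identity for the residual is pure linearity of the inner
  product, and the identity for the cost follows by summing its squares.  The
  bound on the approximation error psi_i = (a_i - a_j) . n_i, j = pi(x,i),
  combines two facts:
  (1) Curve geometry: on a unit-speed curve with |gamma''| <= kappa, Taylor's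
      formula gives |gamma(v) - gamma(u) - (v-u) gamma'(u)| <= kappa (v-u)^2 / 2.
      Projecting on the normal n at u kills the linear term, so the normal
      deviation of the chord is at most kappa (v-u)^2 / 2; and if
      kappa |v-u| <= 1 the chord is at least half the arc length.
  (2) Matching: a_{pi(0,i)} = a_i, and since a_i competes in the closest-point
      search, |a_j - a_i| <= 2 |d_i(x)|.
  Hence |s_j - s_i| <= 4 |d_i(x)| and |psi_i| <= kappa (4 |d_i(x)|)^2 / 2.
  The file first proves a second-order Taylor bound for vector-valued functions
  on arbitrary real intervals, then the curve and matching lemmas, and finally
  assembles the theorem.
*)

lemma taylor_remainder_forward:
  fixes f f' f'' :: "real \<Rightarrow> 'a::banach"
  assumes ab: "a \<le> b"
    and d1: "\<And>t. t \<in> {a..b} \<Longrightarrow> (f has_vector_derivative f' t) (at t within {a..b})"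
    and d2: "\<And>t. t \<in> {a..b} \<Longrightarrow> (f' has_vector_derivative f'' t) (at t within {a..b})"
    and bd: "\<And>t. t \<in> {a..b} \<Longrightarrow> norm (f'' t) \<le> K"
  shows "norm (f b - f a - (b - a) *\<^sub>R f' a) \<le> K * (b - a)\<^sup>2 / 2"
proof -
  define Df where "Df = (\<lambda>m::nat. case m of 0 \<Rightarrow> f | Suc 0 \<Rightarrow> f' | _ \<Rightarrow> f'')"
  have Df: "(Df m has_vector_derivative Df (Suc m) t) (at t within {a..b})"
    if "m < 2" "a \<le> t" "t \<le> b" for m t
  proof -
    from \<open>m < 2\<close> have "m = 0 \<or> m = 1" by auto
    then show ?thesis using d1 d2 that by (auto simp: Df_def)
  qed
  have D0: "Df 0 = f" by (simp add: Df_def)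
  note taylor = Taylor_integral[of 2 Df f a b, OF _ D0 Df ab]
    Taylor_integrable[of 2 Df f a b, OF _ D0 Df ab]
  have remainder: "f b - f a - (b - a) *\<^sub>R f' a = integral {a..b} (\<lambda>t. (b - t) *\<^sub>R f'' t)"
    using taylor(1) by (simp add: Df_def numeral_2_eq_2 lessThan_Suc)
  have integrable: "(\<lambda>t. (b - t) *\<^sub>R f'' t) integrable_on {a..b}"
    using taylor(2) by (simp add: Df_def numeral_2_eq_2)
  have majorant: "((\<lambda>t. K * (b - t)) has_integral K * (b - a)\<^sup>2 / 2) {a..b}"
  proof -
    have "((\<lambda>t. K * (b - t)) has_integral
            ((\<lambda>t. - K * (b - t)\<^sup>2 / 2) b - (\<lambda>t. - K * (b - t)\<^sup>2 / 2) a)) {a..b}"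
      by (rule fundamental_theorem_of_calculus[OF ab])
        (auto intro!: derivative_eq_intros
          simp: has_real_derivative_iff_has_vector_derivative[symmetric] field_simps)
    then show ?thesis by simp
  qed
  have "norm (integral {a..b} (\<lambda>t. (b - t) *\<^sub>R f'' t)) \<le> integral {a..b} (\<lambda>t. K * (b - t))"
  proof (rule integral_norm_bound_integral[OF integrable])
    show "(\<lambda>t. K * (b - t)) integrable_on {a..b}" using majorant by blast
    fix t assume "t \<in> {a..b}"
    then show "norm ((b - t) *\<^sub>R f'' t) \<le> K * (b - t)"
      using bd[of t] by (auto simp: mult.commute[of K] intro!: mult_left_mono)
  qed
  then show ?thesis by (simp only: integral_unique[OF majorant] remainder[symmetric])
qed

lemma has_vector_derivative_reflect:
  fixes g g1 :: "real \<Rightarrow> 'a::real_normed_vector"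
  assumes "(g has_vector_derivative g1 (-t)) (at (-t) within S)"
    and "uminus ` T \<subseteq> S"
  shows "((\<lambda>t. g (-t)) has_vector_derivative - g1 (-t)) (at t within T)"
proof -
  have "(uminus has_vector_derivative (-1::real)) (at t within T)"
    by (auto intro!: derivative_eq_intros)
  moreover have "(g has_vector_derivative g1 (-t)) (at (uminus t) within uminus ` T)"
    using has_vector_derivative_within_subset[OF assms] by simp
  ultimately have "((g \<circ> uminus) has_vector_derivative (-1::real) *\<^sub>R g1 (-t)) (at t within T)"
    by (rule vector_diff_chain_within)
  then show ?thesis by (simp add: o_def)
qed

text \<open>The Taylor bound on an arbitrary real interval, for expansion points on
  either side: the case v < u reduces to the forward case by reflection.\<close>
lemma taylor_remainder_interval:
  fixes g g1 g2 :: "real \<Rightarrow> 'a::banach"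
  assumes iv: "is_interval I"
    and d1: "\<And>t. t \<in> I \<Longrightarrow> (g has_vector_derivative g1 t) (at t within I)"
    and d2: "\<And>t. t \<in> I \<Longrightarrow> (g1 has_vector_derivative g2 t) (at t within I)"
    and bd: "\<And>t. t \<in> I \<Longrightarrow> norm (g2 t) \<le> K"
    and u: "u \<in> I" and v: "v \<in> I"
  shows "norm (g v - g u - (v - u) *\<^sub>R g1 u) \<le> K * (v - u)\<^sup>2 / 2"
proof (cases "u \<le> v")
  case True
  have sub: "{u..v} \<subseteq> I"
    using iv u v unfolding is_interval_1 by (meson atLeastAtMost_iff subsetI)
  show ?thesis
  proof (rule taylor_remainder_forward[OF True])
    fix t assume "t \<in> {u..v}"
    then have tI: "t \<in> I" using sub by blast
    show "(g has_vector_derivative g1 t) (at t within {u..v})"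
      by (rule has_vector_derivative_within_subset[OF d1[OF tI] sub])
    show "(g1 has_vector_derivative g2 t) (at t within {u..v})"
      by (rule has_vector_derivative_within_subset[OF d2[OF tI] sub])
    show "norm (g2 t) \<le> K" by (rule bd[OF tI])
  qed
next
  case False
  have "{v..u} \<subseteq> I"
    using iv u v unfolding is_interval_1 by (meson atLeastAtMost_iff subsetI)
  then have sub: "uminus ` {-u..-v} \<subseteq> I" by auto
  have "norm ((\<lambda>t. g (-t)) (-v) - (\<lambda>t. g (-t)) (-u) - (-v - -u) *\<^sub>R (\<lambda>t. - g1 (-t)) (-u))
          \<le> K * (-v - -u)\<^sup>2 / 2"
  proof (rule taylor_remainder_forward[where f'' = "\<lambda>t. g2 (-t)"])
    show "- u \<le> - v" using False by simp
    fix t assume "t \<in> {-u..-v}"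
    then have tI: "-t \<in> I" using sub by auto
    show "((\<lambda>t. g (-t)) has_vector_derivative - g1 (-t)) (at t within {-u..-v})"
      by (rule has_vector_derivative_reflect[of g g1 t I, OF d1[OF tI] sub])
    have "((\<lambda>t. g1 (-t)) has_vector_derivative - g2 (-t)) (at t within {-u..-v})"
      by (rule has_vector_derivative_reflect[of g1 g2 t I, OF d2[OF tI] sub])
    then show "((\<lambda>t. - g1 (-t)) has_vector_derivative g2 (-t)) (at t within {-u..-v})"
      using has_vector_derivative_minus by fastforce
    show "norm (g2 (-t)) \<le> K" using bd[OF tI] .
  qed
  moreover have "(-v - -u)\<^sup>2 = (v - u)\<^sup>2" by (simp add: power2_commute)
  ultimately show ?thesis by (simp add: algebra_simps)
qed

lemma arc_curve_tangent_deviation: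
  assumes "arc_curve kappa I g g1 g2" and "u \<in> I" and "v \<in> I"
  shows "norm (g v - g u - (v - u) *\<^sub>R g1 u) \<le> kappa * (v - u)\<^sup>2 / 2"
  using assms by (intro taylor_remainder_interval[of I]) (auto simp: arc_curve_def)

lemma arc_curve_normal_deviation:
  assumes curve: "arc_curve kappa I g g1 g2" and u: "u \<in> I" and v: "v \<in> I"
    and unit: "norm nv = 1" and normal: "inner nv (g1 u) = 0"
  shows "\<bar>inner (g v - g u) nv\<bar> \<le> kappa * (v - u)\<^sup>2 / 2"
proof -
  define R where "R = g v - g u - (v - u) *\<^sub>R g1 u"
  have "inner (g1 u) nv = 0" using normal by (simp add: inner_commute)
  then have "inner (g v - g u) nv = inner R nv"
    by (simp add: R_def inner_diff_left)
  also have "\<bar>\<dots>\<bar> \<le> norm R"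
    using Cauchy_Schwarz_ineq2[of R nv] unit by simp
  finally show ?thesis
    using arc_curve_tangent_deviation[OF curve u v] by (simp add: R_def)
qed

lemma arc_curve_arc_le_chord:
  assumes curve: "arc_curve kappa I g g1 g2" and u: "u \<in> I" and v: "v \<in> I"
    and short: "kappa * \<bar>v - u\<bar> \<le> 1"
  shows "\<bar>v - u\<bar> \<le> 2 * norm (g v - g u)"
proof -
  define R where "R = g v - g u - (v - u) *\<^sub>R g1 u"
  have "norm (g1 u) = 1" using curve u by (auto simp: arc_curve_def)
  then have "\<bar>v - u\<bar> = norm ((v - u) *\<^sub>R g1 u)" by simp
  also have "\<dots> \<le> norm (g v - g u) + norm R"
    using norm_triangle_ineq4[of "g v - g u" R] by (simp add: R_def)
  finally have arc: "\<bar>v - u\<bar> \<le> norm (g v - g u) + norm R" .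
  have "norm R \<le> kappa * (v - u)\<^sup>2 / 2"
    using arc_curve_tangent_deviation[OF curve u v] by (simp add: R_def)
  also have "kappa * (v - u)\<^sup>2 = (kappa * \<bar>v - u\<bar>) * \<bar>v - u\<bar>"
    by (simp add: power2_eq_square)
  also have "\<dots> \<le> \<bar>v - u\<bar>"
    using mult_right_mono[OF short, of "\<bar>v - u\<bar>"] by simp
  finally show ?thesis using arc by simp
qed

text \<open>With zero motion the displacement vanishes, so each point is matched to
  (a copy of) itself.\<close>
lemma closest_matching_zero:
  assumes "closest_matching N a p" and "i < N"
  shows "a (p 0 i) = a i"
proof -
  have "disp 0 (a i) = 0" by (simp add: disp_def rot_def zero_prod_def)
  moreover have "norm (a i + disp 0 (a i) - a (p 0 i)) \<le> norm (a i + disp 0 (a i) - a i)"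
    using assms unfolding closest_matching_def by blast
  ultimately show ?thesis by simp
qed

text \<open>The matched point is within twice the displacement of the original
  point, since the original point itself competes in the minimization.\<close>
lemma closest_matching_near:
  assumes "closest_matching N a p" and "i < N"
  shows "norm (a (p x i) - a i) \<le> 2 * norm (disp x (a i))"
proof -
  define d where "d = disp x (a i)"
  have "norm (a i + d - a (p x i)) \<le> norm (a i + d - a i)"
    using assms unfolding closest_matching_def d_def by blast
  then have closest: "norm (a i + d - a (p x i)) \<le> norm d" by simp
  have "norm (a (p x i) - a i) \<le> norm (a i + d - a (p x i)) + norm d"
    using norm_triangle_ineq4[of "a i + d - a (p x i)" d]
    by (simp add: norm_minus_commute algebra_simps)
  with closest show ?thesis by (simp add: d_def)
qed

lemma residual_split:
  fixes q b b' nv :: "'a::real_inner"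
  shows "inner (q - b) nv = inner (q - b') nv + inner (b' - b) nv"
  by (simp add: inner_diff_left)

theorem mainTheorem2:
  fixes kappa :: real
    and M :: nat
    and I :: "nat \<Rightarrow> real set"
    and \<gamma> \<gamma>1 \<gamma>2 :: "nat \<Rightarrow> real \<Rightarrow> pt"
    and N :: nat
    and a :: "nat \<Rightarrow> pt"
    and c :: "nat \<Rightarrow> nat"
    and s :: "nat \<Rightarrow> real"
    and n :: "nat \<Rightarrow> pt"
    and p :: "real \<times> pt \<Rightarrow> nat \<Rightarrow> nat"
    and x :: "real \<times> pt"
    and i :: nat
  assumes kappa_nonneg: "kappa \<ge> 0"
    and curves: "\<And>m. m < M \<Longrightarrow> arc_curve kappa (I m) (\<gamma> m) (\<gamma>1 m) (\<gamma>2 m)"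
    and disjoint: "\<And>m m'. m < M \<Longrightarrow> m' < M \<Longrightarrow> m \<noteq> m' \<Longrightarrow>
                      \<gamma> m ` I m \<inter> \<gamma> m' ` I m' = {}"
    and distinct_pts: "inj_on a {..<N}"
    and on_curve: "\<And>k. k < N \<Longrightarrow> c k < M \<and> s k \<in> I (c k) \<and> a k = \<gamma> (c k) (s k)"
    and normals: "\<And>k. k < N \<Longrightarrow> norm (n k) = 1 \<and> inner (n k) (\<gamma>1 (c k) (s k)) = 0"
    and matching: "closest_matching N a p"
    and i_lt: "i < N"
    and same_curve: "c (p x i) = c i"
  shows "(let \<psi> = (\<lambda>k. inner (a (p 0 k) - a (p x k)) (n k)) in
           inner (a i + disp x (a i) - a (p x i)) (n i)
             = inner (a i + disp x (a i) - a (p 0 i)) (n i) + \<psi> i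
         \<and> (\<Sum>k<N. (inner (a k + disp x (a k) - a (p x k)) (n k))\<^sup>2)
             = (\<Sum>k<N. (inner (a k + disp x (a k) - a (p 0 k)) (n k) + \<psi> k)\<^sup>2)
         \<and> (kappa * \<bar>s i - s (p x i)\<bar> \<le> 1 \<longrightarrow>
              \<bar>\<psi> i\<bar> \<le> 8 * kappa * (norm (disp x (a i)))\<^sup>2))"
proof -
  define j where "j = p x i"
  define d where "d = norm (disp x (a i))"
  have "j < N" using matching i_lt unfolding closest_matching_def j_def by blast
  then have curve: "arc_curve kappa (I (c i)) (\<gamma> (c i)) (\<gamma>1 (c i)) (\<gamma>2 (c i))"
    and si: "s i \<in> I (c i)" and sj: "s j \<in> I (c i)"
    and ai: "a i = \<gamma> (c i) (s i)" and aj: "a j = \<gamma> (c i) (s j)"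
    using curves on_curve[OF i_lt] on_curve[of j] same_curve by (auto simp: j_def)
  have "inner (a (p 0 i) - a j) (n i) = - inner (a j - a i) (n i)"
    using closest_matching_zero[OF matching i_lt] by (simp add: inner_diff_left)
  then have psi: "\<bar>inner (a (p 0 i) - a j) (n i)\<bar> \<le> kappa * (s j - s i)\<^sup>2 / 2"
    using arc_curve_normal_deviation[OF curve si sj] normals[OF i_lt] ai aj by simp
  have "norm (a j - a i) \<le> 2 * d"
    using closest_matching_near[OF matching i_lt] by (simp add: j_def d_def)
  then have "kappa * \<bar>s i - s j\<bar> \<le> 1 \<Longrightarrow> \<bar>s j - s i\<bar> \<le> 4 * d"
    using arc_curve_arc_le_chord[OF curve si sj] unfolding ai aj
    by (simp add: abs_minus_commute)
  then have "kappa * \<bar>s i - s j\<bar> \<le> 1 \<Longrightarrow> (s j - s i)\<^sup>2 \<le> 16 * d\<^sup>2"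
    using power_mono[of "\<bar>s j - s i\<bar>" "4 * d" 2] by (simp add: power_mult_distrib)
  then have "kappa * \<bar>s i - s j\<bar> \<le> 1 \<Longrightarrow> kappa * (s j - s i)\<^sup>2 / 2 \<le> 8 * kappa * d\<^sup>2"
    using mult_left_mono[OF _ kappa_nonneg] by fastforce
  with psi have bound: "kappa * \<bar>s i - s j\<bar> \<le> 1 \<Longrightarrow>
      \<bar>inner (a (p 0 i) - a j) (n i)\<bar> \<le> 8 * kappa * d\<^sup>2"
    by linarith
  have split: "\<And>k. inner (a k + disp x (a k) - a (p x k)) (n k)
      = inner (a k + disp x (a k) - a (p 0 k)) (n k) + inner (a (p 0 k) - a (p x k)) (n k)"
    by (rule residual_split)
  show ?thesis
    unfolding Let_def split using bound by (simp add: j_def d_def)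
qed

end
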